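(* For all colour indices $A,B$, $$ \mathcal{X}^2\,g^{AB}=\overline{(\gamma_\mu)_{gh}}\,\overline{\epsilon}^{\,CGH}\,\overline{\psi^h_H}\,\overline{\psi^g_G}\,\overline{\psi^c_C}\,\psi^{Ad}\,V^{Bef}\,\big\{2\beta_{ce}(\gamma^\mu)_{fd}+\beta_{cd}(\gamma^\mu)_{fe}\big\}, $$ where $V^{Cab}:=\epsilon^{ABC}\psi^a_A\psi^b_B$ and $\psi^{Ad}:=g^{AB}\psi^d_B$.
   Context: Colour indices $A,B,\dots\in\{1,2,3\}$; bispinor indices $a,b,\dots\in\{1,2,\dot1,\dot2\}$; summation over repeated indices; spacetime indices raised/lowered with $\eta=\mathrm{diag}(1,-1,-1,-1)$. $\Lambda$ is the complex Grassmann algebra generated by the 24 anticommuting generators $\psi^a_A,\overline{\psi^a_A}$. $g^{AB}=\delta^{AB}$, $\epsilon^{ABC}$ is the totally antisymmetric symbol with $\epsilon^{123}=1$ and $\overline{\epsilon}^{ABC}$ its complex conjugate (equal to it). Spinor structures: $\sigma^\mu=(I,\sigma^1,\sigma^2,\sigma^3)$, $\tilde\sigma^\mu=(I,-\sigma^k)$; in the ordering $(1,2,\dot1,\dot2)$, $(\gamma^\mu)^a{}_b=\begin{pmatrix}0&\tilde\sigma^\mu\\ \sigma^\mu&0\end{pmatrix}$, $\epsilon_{ab}=\begin{pmatrix}\varepsilon&0\\0&-\varepsilon\end{pmatrix}$ with $\varepsilon=\begin{pmatrix}0&1\\-1&0\end{pmatrix}$, $(\gamma^\mu)_{cb}:=(\gamma^\mu)^a{}_b\epsilon_{ac}$,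 $\beta_{ab}=\begin{pmatrix}0&I_2\\ I_2&0\end{pmatrix}$, and $\beta_{abcd}:=\tfrac12\overline{(\gamma_\mu)_{ab}}(\gamma^\mu)_{cd}$. Define $\mathcal{J}^{ab}:=\overline{\psi^a_A}g^{AB}\psi^b_B$ and $\mathcal{X}^2:=4\beta_{bcef}\beta_{ad}\{\mathcal{J}^{ad}\mathcal{J}^{be}\mathcal{J}^{cf}+2\mathcal{J}^{ae}\mathcal{J}^{bf}\mathcal{J}^{cd}\}$. *)

theory Defs
  imports Complex_Main "HOL-Library.Function_Algebras"
begin

text \<open>An element of the Grassmann (exterior) algebra over generators indexed by nat is
represented by its coefficients on the basis monomials e_S (S a finite set of generator
indices, e_S = ordered product of the generators in S in increasing order).\<close>

type_synonym grass = "nat set \<Rightarrow> complex"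

definition gsign :: "nat set \<Rightarrow> nat set \<Rightarrow> complex" where
  "gsign T U = (-1) ^ card {(i, j). i \<in> T \<and> j \<in> U \<and> j < i}"

definition gmul :: "grass \<Rightarrow> grass \<Rightarrow> grass" (infixl "\<odot>" 70) where
  "x \<odot> y = (\<lambda>S. if finite S then (\<Sum>T\<in>Pow S. gsign T (S - T) * x T * y (S - T)) else 0)"

definition gscale :: "complex \<Rightarrow> grass \<Rightarrow> grass" (infixr "\<cdot>\<^sub>G" 75) where
  "c \<cdot>\<^sub>G x = (\<lambda>S. c * x S)"

definition gen :: "nat \<Rightarrow> grass" where
  "gen k = (\<lambda>S. if S = {k} then 1 else 0)"

text \<open>Colour indices A \<in> {0,1,2} (for 1,2,3); bispinor indices a \<in> {0,1,2,3}
(for 1,2,dot1,dot2). The 24 generators: psi^a_A = gen (4A+a), conj psi^a_A = gen (12+4A+a).\<close>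

definition psi :: "nat \<Rightarrow> nat \<Rightarrow> grass" where
  "psi a A = gen (4 * A + a)"

definition psib :: "nat \<Rightarrow> nat \<Rightarrow> grass" where
  "psib a A = gen (12 + 4 * A + a)"

definition gcol :: "nat \<Rightarrow> nat \<Rightarrow> complex" where
  "gcol A B = (if A = B then 1 else 0)"

definition levi :: "nat \<Rightarrow> nat \<Rightarrow> nat \<Rightarrow> complex" where
  "levi A B C =
     (if (A, B, C) \<in> {(0,1,2), (1,2,0), (2,0,1)} then 1
      else if (A, B, C) \<in> {(0,2,1), (2,1,0), (1,0,2)} then -1 else 0)"

definition pauli :: "nat \<Rightarrow> nat \<Rightarrow> nat \<Rightarrow> complex" where
  "pauli k i j =
     (if k = 0 then (if i = j then 1 else 0)
      else if k = 1 then (if i \<noteq> j then 1 else 0)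
      else if k = 2 then (if i = 0 \<and> j = 1 then -\<i> else if i = 1 \<and> j = 0 then \<i> else 0)
      else if k = 3 then (if i = 0 \<and> j = 0 then 1 else if i = 1 \<and> j = 1 then -1 else 0)
      else 0)"

definition sigma :: "nat \<Rightarrow> nat \<Rightarrow> nat \<Rightarrow> complex" where
  "sigma \<mu> i j = pauli \<mu> i j"

definition sigmat :: "nat \<Rightarrow> nat \<Rightarrow> nat \<Rightarrow> complex" where
  "sigmat \<mu> i j = (if \<mu> = 0 then pauli 0 i j else - pauli \<mu> i j)"

definition gammaUD :: "nat \<Rightarrow> nat \<Rightarrow> nat \<Rightarrow> complex" where
  "gammaUD \<mu> a b =
     (if a < 2 \<and> 2 \<le> b \<and> b < 4 then sigmat \<mu> a (b - 2)
      else if 2 \<le> a \<and> a < 4 \<and> b < 2 then sigma \<mu> (a - 2) b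
      else 0)"

definition eps2 :: "nat \<Rightarrow> nat \<Rightarrow> complex" where
  "eps2 i j = (if i = 0 \<and> j = 1 then 1 else if i = 1 \<and> j = 0 then -1 else 0)"

definition eps4 :: "nat \<Rightarrow> nat \<Rightarrow> complex" where
  "eps4 a b =
     (if a < 2 \<and> b < 2 then eps2 a b
      else if 2 \<le> a \<and> a < 4 \<and> 2 \<le> b \<and> b < 4 then - eps2 (a - 2) (b - 2)
      else 0)"

definition gammaDD :: "nat \<Rightarrow> nat \<Rightarrow> nat \<Rightarrow> complex" where
  "gammaDD \<mu> c b = (\<Sum>a<4. gammaUD \<mu> a b * eps4 a c)"

definition eta :: "nat \<Rightarrow> complex" where
  "eta \<mu> = (if \<mu> = 0 then 1 else -1)"

definition gammaLDD :: "nat \<Rightarrow> nat \<Rightarrow> nat \<Rightarrow> complex" where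
  "gammaLDD \<mu> c b = eta \<mu> * gammaDD \<mu> c b"

definition beta2 :: "nat \<Rightarrow> nat \<Rightarrow> complex" where
  "beta2 a b = (if (a < 2 \<and> b = a + 2) \<or> (2 \<le> a \<and> a < 4 \<and> a = b + 2) then 1 else 0)"

definition beta4 :: "nat \<Rightarrow> nat \<Rightarrow> nat \<Rightarrow> nat \<Rightarrow> complex" where
  "beta4 a b c d = (1/2) * (\<Sum>\<mu><4. cnj (gammaLDD \<mu> a b) * gammaDD \<mu> c d)"

definition Jc :: "nat \<Rightarrow> nat \<Rightarrow> grass" where
  "Jc a b = (\<Sum>A<3. \<Sum>B<3. gcol A B \<cdot>\<^sub>G (psib a A \<odot> psi b B))"

definition X2 :: grass where
  "X2 = 4 \<cdot>\<^sub>G (\<Sum>a<4. \<Sum>b<4. \<Sum>c<4. \<Sum>d<4. \<Sum>e<4. \<Sum>f<4.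
          (beta4 b c e f * beta2 a d) \<cdot>\<^sub>G
            (Jc a d \<odot> Jc b e \<odot> Jc c f + 2 \<cdot>\<^sub>G (Jc a e \<odot> Jc b f \<odot> Jc c d)))"

definition Vc :: "nat \<Rightarrow> nat \<Rightarrow> nat \<Rightarrow> grass" where
  "Vc C a b = (\<Sum>A<3. \<Sum>B<3. levi A B C \<cdot>\<^sub>G (psi a A \<odot> psi b B))"

definition psiU :: "nat \<Rightarrow> nat \<Rightarrow> grass" where
  "psiU A d = (\<Sum>B<3. gcol A B \<cdot>\<^sub>G psi d B)"

end

theory Submission
  imports Defs
begin

text \<open>Both beta tensors are Kronecker deltas in disguise: beta_{ad} = delta(d, flip_dot a), where
flip_dot exchanges an undotted index with its dotted partner, and by a Fierz identity beta_{ghef}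
vanishes unless g and h have opposite chirality, in which case it is
-(delta(e, flip_dot g) delta(f, flip_dot h) + delta(e, flip_dot h) delta(f, flip_dot g)).
Contracting them collapses both sides to sums over three spinor indices. On the right one is left
with the colour determinant eps^{CGH} of three conjugate fields times the cyclic sum
psi^{Aa} V^{Bbc} + psi^{Ab} V^{Bca} + psi^{Ac} V^{Bab}, which a Schouten identity turns into g^{AB}
times the colour determinant of three fields. The product of the two determinants expands
(eps eps = sum over permutations of products of deltas) into six products of three J's, and
symmetrising in the two indices of opposite chirality matches them with the terms of X^2.\<close>

section \<open>Grassmann algebra\<close>

lemma sum_additive_hom:
  assumes "h 0 = 0" and "\<And>x y. h (x + y) = h x + h y"
  shows "h (\<Sum>i\<in>I. f i) = (\<Sum>i\<in>I. h (f i))"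
  using sum_comp_morphism[of h f I, OF assms] by (simp add: o_def)

lemma gscale_add_right: "c \<cdot>\<^sub>G (x + y) = c \<cdot>\<^sub>G x + c \<cdot>\<^sub>G y"
  and gscale_add_left: "(c + d) \<cdot>\<^sub>G x = c \<cdot>\<^sub>G x + d \<cdot>\<^sub>G x"
  and gscale_minus_right: "c \<cdot>\<^sub>G (- x) = - (c \<cdot>\<^sub>G x)"
  and gscale_minus_left: "(- c) \<cdot>\<^sub>G x = - (c \<cdot>\<^sub>G x)"
  and gscale_gscale: "c \<cdot>\<^sub>G (d \<cdot>\<^sub>G x) = (c * d) \<cdot>\<^sub>G x"
  by (simp_all add: gscale_def fun_eq_iff algebra_simps)

lemma gscale_diff_left: "(c - d) \<cdot>\<^sub>G x = c \<cdot>\<^sub>G x - d \<cdot>\<^sub>G x"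
  by (simp add: gscale_def fun_eq_iff algebra_simps)

lemma gscale_one [simp]: "1 \<cdot>\<^sub>G x = x"
  and gscale_zero_left [simp]: "0 \<cdot>\<^sub>G x = 0"
  and gscale_zero_right [simp]: "c \<cdot>\<^sub>G 0 = 0"
  by (simp_all add: gscale_def fun_eq_iff)

lemma gscale_sum_right: "c \<cdot>\<^sub>G (\<Sum>i\<in>I. f i) = (\<Sum>i\<in>I. c \<cdot>\<^sub>G f i)"
  by (rule sum_additive_hom[where h = "gscale c"]) (simp_all add: gscale_add_right)

lemma gscale_sum_left: "(\<Sum>i\<in>I. f i) \<cdot>\<^sub>G x = (\<Sum>i\<in>I. f i \<cdot>\<^sub>G x)"
  by (rule sum_additive_hom[where h = "\<lambda>c. c \<cdot>\<^sub>G x"]) (simp_all add: gscale_add_left)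

lemma grass_double_cancel: "x + x = y + y \<Longrightarrow> x = (y :: grass)"
  by (simp add: fun_eq_iff)

lemma gmul_add_left: "(x + y) \<odot> z = x \<odot> z + y \<odot> z"
  and gmul_add_right: "z \<odot> (x + y) = z \<odot> x + z \<odot> y"
  and gmul_minus_left: "(- x) \<odot> z = - (x \<odot> z)"
  and gmul_minus_right: "z \<odot> (- x) = - (z \<odot> x)"
  and gmul_gscale_left: "(c \<cdot>\<^sub>G x) \<odot> z = c \<cdot>\<^sub>G (x \<odot> z)"
  and gmul_gscale_right: "z \<odot> (c \<cdot>\<^sub>G x) = c \<cdot>\<^sub>G (z \<odot> x)"
  by (auto simp: gmul_def gscale_def fun_eq_iff algebra_simps sum.distrib sum_negf sum_distrib_left)

lemma gmul_zero_left [simp]: "0 \<odot> z = 0"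
  and gmul_zero_right [simp]: "z \<odot> 0 = 0"
  by (simp_all add: gmul_def fun_eq_iff)

lemma gmul_diff_left: "(x - y) \<odot> z = x \<odot> z - y \<odot> z"
  and gmul_diff_right: "z \<odot> (x - y) = z \<odot> x - z \<odot> y"
  by (simp_all only: diff_conv_add_uminus gmul_add_left gmul_add_right gmul_minus_left gmul_minus_right)

lemma gmul_sum_left: "(\<Sum>i\<in>I. f i) \<odot> z = (\<Sum>i\<in>I. f i \<odot> z)"
  by (rule sum_additive_hom[where h = "\<lambda>x. x \<odot> z"]) (simp_all add: gmul_add_left)

lemma gmul_sum_right: "z \<odot> (\<Sum>i\<in>I. f i) = (\<Sum>i\<in>I. z \<odot> f i)"
  by (rule sum_additive_hom[where h = "gmul z"]) (simp_all add: gmul_add_right)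

lemma gsign_union_left:
  assumes "finite T" "finite T'" "finite U" "T \<inter> T' = {}"
  shows "gsign (T \<union> T') U = gsign T U * gsign T' U"
proof -
  let ?inv = "\<lambda>T. {(i, j). i \<in> T \<and> j \<in> U \<and> j < i}"
  have "?inv (T \<union> T') = ?inv T \<union> ?inv T'" and "?inv T \<inter> ?inv T' = {}"
    using assms(4) by auto
  moreover have "finite (?inv X)" if "finite X" for X
    by (rule finite_subset[of _ "X \<times> U"]) (use that assms(3) in auto)
  ultimately show ?thesis
    using assms(1,2) by (simp add: gsign_def card_Un_disjoint power_add)
qed

lemma gsign_union_right:
  assumes "finite T" "finite U" "finite U'" "U \<inter> U' = {}"
  shows "gsign T (U \<union> U') = gsign T U * gsign T U'"
proof -
  let ?inv = "\<lambda>U. {(i, j). i \<in> T \<and> j \<in> U \<and> j < i}"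
  have "?inv (U \<union> U') = ?inv U \<union> ?inv U'" and "?inv U \<inter> ?inv U' = {}"
    using assms(4) by auto
  moreover have "finite (?inv X)" if "finite X" for X
    by (rule finite_subset[of _ "T \<times> X"]) (use that assms(1) in auto)
  ultimately show ?thesis
    using assms(2,3) by (simp add: gsign_def card_Un_disjoint power_add)
qed

lemma sum_Pow_Pow:
  assumes "finite S"
  shows "(\<Sum>T\<in>Pow S. \<Sum>U\<in>Pow T. f U T) = (\<Sum>U\<in>Pow S. \<Sum>V\<in>Pow (S - U). f U (U \<union> V))"
proof -
  have "(\<Sum>T\<in>Pow S. \<Sum>U\<in>Pow T. f U T) = (\<Sum>T\<in>Pow S. \<Sum>U\<in>{U\<in>Pow S. U \<subseteq> T}. f U T)"
    by (intro sum.cong) auto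
  also have "\<dots> = (\<Sum>U\<in>Pow S. \<Sum>T\<in>{T\<in>Pow S. U \<subseteq> T}. f U T)"
    by (rule sum.swap_restrict) (use assms in auto)
  also have "\<dots> = (\<Sum>U\<in>Pow S. \<Sum>V\<in>Pow (S - U). f U (U \<union> V))"
  proof (rule sum.cong[OF refl])
    fix U assume "U \<in> Pow S"
    then have "bij_betw (\<lambda>V. U \<union> V) (Pow (S - U)) {T\<in>Pow S. U \<subseteq> T}"
      by (intro bij_betw_byWitness[where f' = "\<lambda>T. T - U"]) auto
    then show "(\<Sum>T\<in>{T\<in>Pow S. U \<subseteq> T}. f U T) = (\<Sum>V\<in>Pow (S - U). f U (U \<union> V))"
      by (simp add: sum.reindex_bij_betw)
  qed
  finally show ?thesis .
qed

lemma gmul_assoc: "(x \<odot> y) \<odot> z = x \<odot> (y \<odot> z)"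
proof (rule ext)
  fix S :: "nat set"
  show "((x \<odot> y) \<odot> z) S = (x \<odot> (y \<odot> z)) S"
  proof (cases "finite S")
    case False
    then show ?thesis by (simp add: gmul_def)
  next
    case fin: True
    have "((x \<odot> y) \<odot> z) S = (\<Sum>T\<in>Pow S. \<Sum>U\<in>Pow T.
            gsign T (S - T) * gsign U (T - U) * x U * y (T - U) * z (S - T))"
      unfolding gmul_def using fin
      by (auto simp: sum_distrib_left sum_distrib_right algebra_simps finite_subset intro!: sum.cong)
    also have "\<dots> = (\<Sum>U\<in>Pow S. \<Sum>V\<in>Pow (S - U). gsign (U \<union> V) (S - (U \<union> V)) * gsign U V
            * x U * y V * z (S - (U \<union> V)))"
      unfolding sum_Pow_Pow[OF fin]
    proof (intro sum.cong refl)
      fix U V assume "V \<in> Pow (S - U)"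
      then have "U \<union> V - U = V" by auto
      then show "gsign (U \<union> V) (S - (U \<union> V)) * gsign U (U \<union> V - U) * x U * y (U \<union> V - U)
          * z (S - (U \<union> V)) = gsign (U \<union> V) (S - (U \<union> V)) * gsign U V * x U * y V * z (S - (U \<union> V))"
        by simp
    qed
    also have "\<dots> = (\<Sum>U\<in>Pow S. \<Sum>V\<in>Pow (S - U).
            gsign U (S - U) * gsign V (S - U - V) * x U * y V * z (S - U - V))"
    proof (intro sum.cong refl)
      fix U V assume U: "U \<in> Pow S" and V: "V \<in> Pow (S - U)"
      then have fin_UV: "finite U" "finite V" "finite (S - U - V)"
        using fin by (auto intro: finite_subset)
      have split_S: "S - (U \<union> V) = S - U - V" by auto
      have "gsign (U \<union> V) (S - U - V) = gsign U (S - U - V) * gsign V (S - U - V)"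
        by (rule gsign_union_left) (use fin_UV V in auto)
      moreover have "gsign U (S - U) = gsign U V * gsign U (S - U - V)"
        using gsign_union_right[of U V "S - U - V"] fin_UV V by (simp add: Un_absorb1)
      ultimately show "gsign (U \<union> V) (S - (U \<union> V)) * gsign U V * x U * y V * z (S - (U \<union> V)) =
            gsign U (S - U) * gsign V (S - U - V) * x U * y V * z (S - U - V)"
        unfolding split_S by simp
    qed
    also have "\<dots> = (x \<odot> (y \<odot> z)) S"
      unfolding gmul_def using fin
      by (auto simp: sum_distrib_left algebra_simps finite_subset Diff_Diff_Int intro!: sum.cong)
    finally show ?thesis .
  qed
qed

lemmas grass_simps = gmul_assoc gmul_add_left gmul_add_right gmul_diff_left gmul_diff_right
  gmul_minus_left gmul_minus_right gmul_gscale_left gmul_gscale_right gmul_sum_left gmul_sum_right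
  gscale_add_right gscale_minus_left gscale_minus_right gscale_gscale gscale_sum_right

lemma gen_mul_gen:
  "gen i \<odot> gen j = (\<lambda>S. if S = {i, j} \<and> i \<noteq> j then gsign {i} {j} else 0)"
proof (rule ext)
  fix S :: "nat set"
  show "(gen i \<odot> gen j) S = (if S = {i, j} \<and> i \<noteq> j then gsign {i} {j} else 0)"
  proof (cases "finite S")
    case False
    then show ?thesis by (auto simp: gmul_def)
  next
    case True
    then have "(gen i \<odot> gen j) S = (\<Sum>T\<in>Pow S. if T = {i} then gsign {i} (S - {i}) * gen j (S - {i}) else 0)"
      unfolding gmul_def by (simp only: if_True) (rule sum.cong[OF refl], simp add: gen_def)
    also have "\<dots> = (if i \<in> S then gsign {i} (S - {i}) * gen j (S - {i}) else 0)"
      using True by simp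
    also have "\<dots> = (if S = {i, j} \<and> i \<noteq> j then gsign {i} {j} else 0)"
    proof (cases "i \<in> S \<and> S - {i} = {j}")
      case True
      then have "S = {i, j}" "i \<noteq> j" by auto
      with True show ?thesis by (simp add: gen_def)
    next
      case False
      then show ?thesis by (auto simp: gen_def)
    qed
    finally show ?thesis .
  qed
qed

lemma gsign_singletons: "gsign {i} {j} = (if j < i then -1 else 1)"
proof -
  have "{(a, b). a \<in> {i} \<and> b \<in> {j} \<and> b < a} = (if j < i then {(i, j)} else {})"
    by auto
  then show ?thesis by (simp add: gsign_def)
qed

lemma gen_anticomm: "gen i \<odot> gen j = - (gen j \<odot> gen i)"
proof -
  have "{j, i} = {i, j}" by auto
  then show ?thesis
    by (auto simp: gen_mul_gen fun_eq_iff gsign_singletons simp del: insert_commute)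
qed

definition is_generator :: "grass \<Rightarrow> bool" where
  "is_generator x \<longleftrightarrow> (\<exists>k. x = gen k)"

lemma is_generator_psi [simp]: "is_generator (psi a A)"
  and is_generator_psib [simp]: "is_generator (psib a A)"
  by (auto simp: is_generator_def psi_def psib_def)

lemma generator_anticomm: "is_generator x \<Longrightarrow> is_generator y \<Longrightarrow> x \<odot> y = - (y \<odot> x)"
  unfolding is_generator_def using gen_anticomm by blast

lemma generator_left_anticomm:
  "is_generator x \<Longrightarrow> is_generator y \<Longrightarrow> x \<odot> (y \<odot> z) = - (y \<odot> (x \<odot> z))"
  by (metis gmul_assoc gmul_minus_left generator_anticomm)

lemma generator_pairs_regroup:
  assumes "is_generator a1" "is_generator a2" "is_generator a3"
    and "is_generator b1" "is_generator b2" "is_generator b3"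
  shows "(a1 \<odot> b1) \<odot> (a2 \<odot> b2) \<odot> (a3 \<odot> b3) = - ((a1 \<odot> a2 \<odot> a3) \<odot> (b1 \<odot> b2 \<odot> b3))"
proof -
  have "b2 \<odot> (a3 \<odot> b3) = - (a3 \<odot> (b2 \<odot> b3))"
    and "b1 \<odot> (a2 \<odot> Z) = - (a2 \<odot> (b1 \<odot> Z))" and "b1 \<odot> (a3 \<odot> Z) = - (a3 \<odot> (b1 \<odot> Z))" for Z
    by (intro generator_left_anticomm assms)+
  then show ?thesis by (simp add: gmul_assoc gmul_minus_left gmul_minus_right)
qed

lemma generator_pairs_commute:
  assumes "is_generator p" "is_generator q" "is_generator r" "is_generator s"
  shows "(p \<odot> q) \<odot> (r \<odot> s) = (r \<odot> s) \<odot> (p \<odot> q)"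
proof -
  have "q \<odot> (r \<odot> s) = - (r \<odot> (q \<odot> s))" and "q \<odot> s = - (s \<odot> q)"
    and "p \<odot> (r \<odot> Z) = - (r \<odot> (p \<odot> Z))" and "p \<odot> (s \<odot> Z) = - (s \<odot> (p \<odot> Z))" for Z
    by (intro generator_left_anticomm generator_anticomm assms)+
  then show ?thesis
    by (simp add: gmul_assoc gmul_minus_left gmul_minus_right)
qed

lemma sum_lessThan_3: "(\<Sum>i<3::nat. f i) = f 0 + f 1 + f 2"
  by (simp add: eval_nat_numeral)

lemma less_3_cases: "(A::nat) < 3 \<Longrightarrow> A = 0 \<or> A = 1 \<or> A = 2"
  by auto

lemma sum_lessThan_4: "(\<Sum>i<4::nat. f i) = f 0 + f 1 + f 2 + f 3"
  by (simp add: eval_nat_numeral)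

lemma less_4_cases: "(a::nat) < 4 \<Longrightarrow> a = 0 \<or> a = 1 \<or> a = 2 \<or> a = 3"
  by auto

lemma sum_reverse3: "(\<Sum>z\<in>Z. \<Sum>y\<in>Y. \<Sum>x\<in>X. f x y z) = (\<Sum>x\<in>X. \<Sum>y\<in>Y. \<Sum>z\<in>Z. f x y z)"
proof -
  have "(\<Sum>z\<in>Z. \<Sum>y\<in>Y. \<Sum>x\<in>X. f x y z) = (\<Sum>z\<in>Z. \<Sum>x\<in>X. \<Sum>y\<in>Y. f x y z)"
    by (intro sum.cong refl sum.swap)
  also have "\<dots> = (\<Sum>x\<in>X. \<Sum>z\<in>Z. \<Sum>y\<in>Y. f x y z)"
    by (rule sum.swap)
  also have "\<dots> = (\<Sum>x\<in>X. \<Sum>y\<in>Y. \<Sum>z\<in>Z. f x y z)"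
    by (intro sum.cong refl sum.swap)
  finally show ?thesis .
qed

lemma sum_rotate3: "(\<Sum>x\<in>X. \<Sum>y\<in>Y. \<Sum>z\<in>Z. f x y z) = (\<Sum>z\<in>Z. \<Sum>x\<in>X. \<Sum>y\<in>Y. f x y z)"
proof -
  have "(\<Sum>x\<in>X. \<Sum>y\<in>Y. \<Sum>z\<in>Z. f x y z) = (\<Sum>x\<in>X. \<Sum>z\<in>Z. \<Sum>y\<in>Y. f x y z)"
    by (intro sum.cong refl sum.swap)
  then show ?thesis
    by (simp only: sum.swap[of _ X])
qed

lemma sum_symmetric_pairs_eq:
  fixes P Q :: "'i \<Rightarrow> 'i \<Rightarrow> grass"
  assumes "\<And>b c. R b c = R c b" and "\<And>b c. R b c \<Longrightarrow> P b c + P c b = Q b c + Q c b"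
  shows "(\<Sum>b\<in>I. \<Sum>c\<in>I. (if R b c then k else 0) \<cdot>\<^sub>G P b c) =
    (\<Sum>b\<in>I. \<Sum>c\<in>I. (if R b c then k else 0) \<cdot>\<^sub>G Q b c)"
proof -
  define S where "S F = (\<Sum>b\<in>I. \<Sum>c\<in>I. (if R b c then k else 0) \<cdot>\<^sub>G F b c)" for F
  have transpose: "S F = S (\<lambda>b c. F c b)" for F
    unfolding S_def by (subst sum.swap) (simp add: assms(1))
  have "S P + S P = S (\<lambda>b c. P b c + P c b)"
    by (subst (2) transpose) (simp add: S_def gscale_add_right sum.distrib)
  also have "\<dots> = S (\<lambda>b c. Q b c + Q c b)"
    unfolding S_def by (intro sum.cong refl) (simp add: assms(2))
  also have "\<dots> = S Q + S Q"
    by (subst (2) transpose) (simp add: S_def gscale_add_right sum.distrib)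
  finally show ?thesis
    unfolding S_def[symmetric] by (rule grass_double_cancel)
qed

lemma sum_nested_reorder:
  fixes F :: "nat \<Rightarrow> nat \<Rightarrow> nat \<Rightarrow> nat \<Rightarrow> nat \<Rightarrow> nat \<Rightarrow> nat \<Rightarrow> nat \<Rightarrow> nat \<Rightarrow> nat \<Rightarrow> 'a::comm_monoid_add"
  shows "(\<Sum>\<mu><4. \<Sum>g<4. \<Sum>h<4. \<Sum>C<3. \<Sum>G<3. \<Sum>H<3. \<Sum>c<4. \<Sum>d<4. \<Sum>e<4. \<Sum>f<4. F \<mu> g h C G H c d e f) =
   (\<Sum>g<4. \<Sum>h<4. \<Sum>c<4. \<Sum>d<4. \<Sum>e<4. \<Sum>f<4. \<Sum>C<3. \<Sum>G<3. \<Sum>H<3. \<Sum>\<mu><4. F \<mu> g h C G H c d e f)"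
proof -
  \<comment> \<open>Naming the range of mu lets the swap rules move that sum innermost without also
    permuting the spinor sums among themselves.\<close>
  define M where "M = {..<4::nat}"
  have "(\<Sum>\<mu>\<in>M. \<Sum>g<4. \<Sum>h<4. \<Sum>C<3. \<Sum>G<3. \<Sum>H<3. \<Sum>c<4. \<Sum>d<4. \<Sum>e<4. \<Sum>f<4. F \<mu> g h C G H c d e f) =
    (\<Sum>g<4. \<Sum>h<4. \<Sum>c<4. \<Sum>d<4. \<Sum>e<4. \<Sum>f<4. \<Sum>C<3. \<Sum>G<3. \<Sum>H<3. \<Sum>\<mu>\<in>M. F \<mu> g h C G H c d e f)"
    by (simp only: sum.swap[of _ M] sum.swap[of _ "{..<3::nat}" "{..<4::nat}"])
  then show ?thesis
    by (simp only: M_def)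
qed

section \<open>Colour algebra\<close>

definition colour_det :: "(nat \<Rightarrow> nat \<Rightarrow> grass) \<Rightarrow> grass" where
  "colour_det u = (\<Sum>D<3. \<Sum>E<3. \<Sum>F<3. levi D E F \<cdot>\<^sub>G (u 0 D \<odot> u 1 E \<odot> u 2 F))"

definition colour_cross :: "(nat \<Rightarrow> grass) \<Rightarrow> (nat \<Rightarrow> grass) \<Rightarrow> nat \<Rightarrow> grass" where
  "colour_cross x y C = (\<Sum>A<3. \<Sum>B<3. levi A B C \<cdot>\<^sub>G (x A \<odot> y B))"

definition colour_contract :: "(nat \<Rightarrow> grass) \<Rightarrow> (nat \<Rightarrow> grass) \<Rightarrow> grass" where
  "colour_contract x y = (\<Sum>C<3. x C \<odot> y C)"

lemma levi_swap_12: "levi B A C = - levi A B C"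
  and levi_swap_13: "levi C B A = - levi A B C"
  and cnj_levi [simp]: "cnj (levi A B C) = levi A B C"
  by (auto simp: levi_def)

text \<open>The Schouten identity for the three-dimensional Levi-Civita symbol, contracted with three
rows of generators.\<close>

lemma colour_cross_cyclic_sum:
  assumes gen: "\<And>l D. is_generator (u l D)" and "A < 3" "B < 3"
  shows "u 0 A \<odot> colour_cross (u 1) (u 2) B + u 1 A \<odot> colour_cross (u 2) (u 0) B
      + u 2 A \<odot> colour_cross (u 0) (u 1) B = gcol A B \<cdot>\<^sub>G colour_det u"
proof -
  \<comment> \<open>Oriented by the row index, these let simp sort every monomial into row order 0, 1, 2.\<close>
  have "u l D \<odot> u l' E = - (u l' E \<odot> u l D)"
    and "u l D \<odot> (u l' E \<odot> X) = - (u l' E \<odot> (u l D \<odot> X))" if "l' < l" for l l' D E X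
    by (intro generator_anticomm generator_left_anticomm gen)+
  then show ?thesis
    using less_3_cases[OF \<open>A < 3\<close>] less_3_cases[OF \<open>B < 3\<close>]
    by (elim disjE) (simp_all add: colour_cross_def colour_det_def sum_lessThan_3 levi_def gcol_def grass_simps algebra_simps)
qed

lemma colour_det_permuted_rows:
  assumes gen: "\<And>l D. is_generator (u l D)" and "C1 < 3" "C2 < 3" "C3 < 3"
  shows "u 0 C1 \<odot> u 1 C2 \<odot> u 2 C3 + u 1 C1 \<odot> u 2 C2 \<odot> u 0 C3 + u 2 C1 \<odot> u 0 C2 \<odot> u 1 C3
       + u 0 C1 \<odot> u 2 C2 \<odot> u 1 C3 + u 2 C1 \<odot> u 1 C2 \<odot> u 0 C3 + u 1 C1 \<odot> u 0 C2 \<odot> u 2 C3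
       = levi C1 C2 C3 \<cdot>\<^sub>G colour_det u"
proof -
  have "u l D \<odot> u l' E = - (u l' E \<odot> u l D)"
    and "u l D \<odot> (u l' E \<odot> X) = - (u l' E \<odot> (u l D \<odot> X))" if "l' < l" for l l' D E X
    by (intro generator_anticomm generator_left_anticomm gen)+
  then show ?thesis
    using less_3_cases[OF \<open>C1 < 3\<close>] less_3_cases[OF \<open>C2 < 3\<close>] less_3_cases[OF \<open>C3 < 3\<close>]
    by (elim disjE) (simp_all add: colour_det_def sum_lessThan_3 levi_def grass_simps algebra_simps)
qed

text \<open>Expanding eps eps as a signed sum over permutations, the sign of each permutation cancels
against the sign of reordering the generators, so all six terms enter alike.\<close>

lemma colour_det_mult:
  assumes gen_v: "\<And>l D. is_generator (v l D)" and gen_u: "\<And>l D. is_generator (u l D)"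
  shows "colour_det v \<odot> colour_det u = - (
      colour_contract (v 0) (u 0) \<odot> colour_contract (v 1) (u 1) \<odot> colour_contract (v 2) (u 2)
    + colour_contract (v 0) (u 1) \<odot> colour_contract (v 1) (u 2) \<odot> colour_contract (v 2) (u 0)
    + colour_contract (v 0) (u 2) \<odot> colour_contract (v 1) (u 0) \<odot> colour_contract (v 2) (u 1)
    + colour_contract (v 0) (u 0) \<odot> colour_contract (v 1) (u 2) \<odot> colour_contract (v 2) (u 1)
    + colour_contract (v 0) (u 2) \<odot> colour_contract (v 1) (u 1) \<odot> colour_contract (v 2) (u 0)
    + colour_contract (v 0) (u 1) \<odot> colour_contract (v 1) (u 0) \<odot> colour_contract (v 2) (u 2))"
proof -
  let ?V = "\<lambda>C1 C2 C3. v 0 C1 \<odot> v 1 C2 \<odot> v 2 C3"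
  let ?U = "\<lambda>i j k C1 C2 C3. u i C1 \<odot> u j C2 \<odot> u k C3"
  have contract: "colour_contract (v 0) (u i) \<odot> colour_contract (v 1) (u j) \<odot> colour_contract (v 2) (u k)
      = - (\<Sum>C1<3. \<Sum>C2<3. \<Sum>C3<3. ?V C1 C2 C3 \<odot> ?U i j k C1 C2 C3)" for i j k
    by (simp add: colour_contract_def gmul_sum_left gmul_sum_right generator_pairs_regroup
        gen_u gen_v sum_negf) (rule sum_reverse3)
  have "colour_det v \<odot> colour_det u = (\<Sum>C1<3. \<Sum>C2<3. \<Sum>C3<3. ?V C1 C2 C3 \<odot> (levi C1 C2 C3 \<cdot>\<^sub>G colour_det u))"
    by (simp add: colour_det_def gmul_sum_left gmul_gscale_left gmul_gscale_right)
  also have "\<dots> = (\<Sum>C1<3. \<Sum>C2<3. \<Sum>C3<3. ?V C1 C2 C3 \<odot> (?U 0 1 2 C1 C2 C3 + ?U 1 2 0 C1 C2 C3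
      + ?U 2 0 1 C1 C2 C3 + ?U 0 2 1 C1 C2 C3 + ?U 2 1 0 C1 C2 C3 + ?U 1 0 2 C1 C2 C3))"
    by (intro sum.cong refl arg_cong[where f = "gmul _"] colour_det_permuted_rows[symmetric] gen_u) auto
  finally show ?thesis
    unfolding contract by (simp add: gmul_add_right sum.distrib)
qed

lemma colour_det_reversed:
  "(\<Sum>C<3. \<Sum>G<3. \<Sum>H<3. levi C G H \<cdot>\<^sub>G (u 0 H \<odot> u 1 G \<odot> u 2 C)) = - colour_det u"
proof -
  have "colour_det u = (\<Sum>C<3. \<Sum>G<3. \<Sum>H<3. levi H G C \<cdot>\<^sub>G (u 0 H \<odot> u 1 G \<odot> u 2 C))"
    unfolding colour_det_def by (rule sum_reverse3[symmetric])
  also have "\<dots> = (\<Sum>C<3. \<Sum>G<3. \<Sum>H<3. - (levi C G H \<cdot>\<^sub>G (u 0 H \<odot> u 1 G \<odot> u 2 C)))"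
    by (intro sum.cong refl) (subst levi_swap_13, rule gscale_minus_left)
  finally show ?thesis
    by (simp add: sum_negf)
qed

lemma colour_cross_swap:
  assumes "\<And>A B. x A \<odot> y B = - (y B \<odot> x A)"
  shows "colour_cross x y C = colour_cross y x C"
proof -
  have "levi A B C \<cdot>\<^sub>G (x A \<odot> y B) = levi B A C \<cdot>\<^sub>G (y B \<odot> x A)" for A B
    by (simp only: assms[of A B] levi_swap_12[of A B C] gscale_minus_left gscale_minus_right minus_minus)
  then have "colour_cross x y C = (\<Sum>A<3. \<Sum>B<3. levi B A C \<cdot>\<^sub>G (y B \<odot> x A))"
    by (simp only: colour_cross_def)
  also have "\<dots> = colour_cross y x C"
    unfolding colour_cross_def by (rule sum.swap)
  finally show ?thesis .
qed

lemma colour_contract_commute: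
  assumes "\<And>C. is_generator (x C)" "\<And>C. is_generator (y C)"
    and "\<And>C. is_generator (z C)" "\<And>C. is_generator (w C)"
  shows "colour_contract x y \<odot> colour_contract z w = colour_contract z w \<odot> colour_contract x y"
proof -
  have "colour_contract x y \<odot> colour_contract z w = (\<Sum>D<3. \<Sum>C<3. (x C \<odot> y C) \<odot> (z D \<odot> w D))"
    by (simp add: colour_contract_def gmul_sum_left gmul_sum_right)
  also have "\<dots> = (\<Sum>D<3. \<Sum>C<3. (z D \<odot> w D) \<odot> (x C \<odot> y C))"
    by (intro sum.cong refl generator_pairs_commute assms)
  also have "\<dots> = colour_contract z w \<odot> colour_contract x y"
    by (simp add: colour_contract_def gmul_sum_left gmul_sum_right) (rule sum.swap)
  finally show ?thesis .
qed

section \<open>Spinor tensors\<close>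

definition flip_dot :: "nat \<Rightarrow> nat" where
  "flip_dot a = (a + 2) mod 4"

definition undotted :: "nat \<Rightarrow> bool" where
  "undotted a \<longleftrightarrow> a < 2"

lemma flip_dot_less [simp]: "flip_dot a < 4"
  by (simp add: flip_dot_def)

lemma beta2_eq: "a < 4 \<Longrightarrow> beta2 a b = (if b = flip_dot a then 1 else 0)"
  using less_4_cases[of a] by (auto simp: beta2_def flip_dot_def)

lemma gammaDD_eq: "gammaDD \<mu> c b =
  (if c = 0 then - gammaUD \<mu> 1 b else if c = 1 then gammaUD \<mu> 0 b
   else if c = 2 then gammaUD \<mu> 3 b else if c = 3 then - gammaUD \<mu> 2 b else 0)"
  by (simp add: gammaDD_def sum_lessThan_4 eps4_def eps2_def)

lemma beta4_eq:
  assumes "g < 4" "h < 4" "e < 4" "f < 4"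
  shows "beta4 g h e f = (if undotted g \<noteq> undotted h
    then - ((if e = flip_dot g \<and> f = flip_dot h then 1 else 0)
          + (if e = flip_dot h \<and> f = flip_dot g then 1 else 0)) else 0)"
  using less_4_cases[OF assms(1)] less_4_cases[OF assms(2)] less_4_cases[OF assms(3)] less_4_cases[OF assms(4)]
  by (elim disjE) (simp_all add: beta4_def gammaLDD_def sum_lessThan_4 eta_def gammaDD_eq gammaUD_def
      sigma_def sigmat_def pauli_def undotted_def flip_dot_def)

lemma sum_beta2_gscale: "a < 4 \<Longrightarrow> (\<Sum>d<4. beta2 a d \<cdot>\<^sub>G F d) = F (flip_dot a)"
  by (simp add: beta2_eq if_distrib[where f = "\<lambda>c. c \<cdot>\<^sub>G _"] cong: if_cong)

lemma sum_beta4_gscale: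
  assumes "g < 4" "h < 4"
  shows "(\<Sum>e<4. \<Sum>f<4. beta4 g h e f \<cdot>\<^sub>G F e f) =
    (if undotted g \<noteq> undotted h then -1 else 0) \<cdot>\<^sub>G (F (flip_dot g) (flip_dot h) + F (flip_dot h) (flip_dot g))"
proof -
  \<comment> \<open>Lets sum.delta collapse the inner sum first.\<close>
  have nested: "(if P \<and> Q then x else 0) = (if Q then if P then x else 0 else 0)" for P Q and x :: grass
    by simp
  show ?thesis
    using assms by (simp add: beta4_eq gscale_diff_left gscale_add_left gscale_minus_left gscale_add_right
      sum_subtractf sum.distrib sum_negf if_distrib[where f = "\<lambda>c. c \<cdot>\<^sub>G _"] nested cong: if_cong)
qed

lemma sum_beta4_beta2_gscale:
  assumes "a < 4" "b < 4" "c < 4"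
  shows "(\<Sum>d<4. \<Sum>e<4. \<Sum>f<4. (beta4 b c e f * beta2 a d) \<cdot>\<^sub>G Z d e f) =
    (if undotted b \<noteq> undotted c then -1 else 0) \<cdot>\<^sub>G
      (Z (flip_dot a) (flip_dot b) (flip_dot c) + Z (flip_dot a) (flip_dot c) (flip_dot b))"
proof -
  have "(\<Sum>d<4. \<Sum>e<4. \<Sum>f<4. (beta4 b c e f * beta2 a d) \<cdot>\<^sub>G Z d e f)
      = (\<Sum>d<4. beta2 a d \<cdot>\<^sub>G (\<Sum>e<4. \<Sum>f<4. beta4 b c e f \<cdot>\<^sub>G Z d e f))"
    by (simp add: gscale_sum_right gscale_gscale mult.commute)
  then show ?thesis
    by (simp add: sum_beta4_gscale sum_beta2_gscale assms)
qed

lemma sum_beta2_beta4_gscale: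
  assumes "g < 4" "h < 4" "c < 4"
  shows "(\<Sum>d<4. \<Sum>e<4. \<Sum>f<4. (4 * beta2 c e * beta4 g h f d + 2 * beta2 c d * beta4 g h f e) \<cdot>\<^sub>G Y d e f) =
    (if undotted g \<noteq> undotted h then -4 else 0) \<cdot>\<^sub>G
      (Y (flip_dot h) (flip_dot c) (flip_dot g) + Y (flip_dot g) (flip_dot c) (flip_dot h))
  + (if undotted g \<noteq> undotted h then -2 else 0) \<cdot>\<^sub>G
      (Y (flip_dot c) (flip_dot h) (flip_dot g) + Y (flip_dot c) (flip_dot g) (flip_dot h))"
proof -
  have "(\<Sum>d<4. \<Sum>e<4. \<Sum>f<4. (4 * beta2 c e * beta4 g h f d) \<cdot>\<^sub>G Y d e f)
      = (\<Sum>d<4. \<Sum>f<4. \<Sum>e<4. (4 * beta2 c e * beta4 g h f d) \<cdot>\<^sub>G Y d e f)"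
    by (intro sum.cong refl sum.swap)
  also have "\<dots> = 4 \<cdot>\<^sub>G (\<Sum>f<4. \<Sum>d<4. beta4 g h f d \<cdot>\<^sub>G (\<Sum>e<4. beta2 c e \<cdot>\<^sub>G Y d e f))"
    by (subst sum.swap) (simp add: gscale_sum_right gscale_gscale mult_ac)
  finally have first: "(\<Sum>d<4. \<Sum>e<4. \<Sum>f<4. (4 * beta2 c e * beta4 g h f d) \<cdot>\<^sub>G Y d e f) =
      (if undotted g \<noteq> undotted h then -4 else 0) \<cdot>\<^sub>G
      (Y (flip_dot h) (flip_dot c) (flip_dot g) + Y (flip_dot g) (flip_dot c) (flip_dot h))"
    by (simp only: sum_beta2_gscale sum_beta4_gscale assms) (simp add: gscale_gscale)
  have "(\<Sum>d<4. \<Sum>e<4. \<Sum>f<4. (2 * beta2 c d * beta4 g h f e) \<cdot>\<^sub>G Y d e f)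
      = 2 \<cdot>\<^sub>G (\<Sum>d<4. beta2 c d \<cdot>\<^sub>G (\<Sum>f<4. \<Sum>e<4. beta4 g h f e \<cdot>\<^sub>G Y d e f))"
    by (subst (2) sum.swap) (simp add: gscale_sum_right gscale_gscale mult_ac)
  then have second: "(\<Sum>d<4. \<Sum>e<4. \<Sum>f<4. (2 * beta2 c d * beta4 g h f e) \<cdot>\<^sub>G Y d e f) =
      (if undotted g \<noteq> undotted h then -2 else 0) \<cdot>\<^sub>G
      (Y (flip_dot c) (flip_dot h) (flip_dot g) + Y (flip_dot c) (flip_dot g) (flip_dot h))"
    by (simp only: sum_beta2_gscale sum_beta4_gscale assms) (simp add: gscale_gscale)
  show ?thesis
    by (simp add: gscale_add_left sum.distrib first second)
qed

lemma gcol_sum_gscale: "A < 3 \<Longrightarrow> (\<Sum>B<3. gcol A B \<cdot>\<^sub>G f B) = f A"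
  using less_3_cases[of A] by (auto simp: gcol_def sum_lessThan_3)

lemma psiU_eq: "A < 3 \<Longrightarrow> psiU A d = psi d A"
  by (simp add: psiU_def gcol_sum_gscale)

lemma Jc_eq_colour_contract: "Jc a b = colour_contract (psib a) (psi b)"
  unfolding Jc_def colour_contract_def
  by (intro sum.cong refl) (simp add: gcol_sum_gscale gmul_gscale_right)

lemma Jc_commute: "Jc a b \<odot> Jc c d = Jc c d \<odot> Jc a b"
  unfolding Jc_eq_colour_contract by (intro colour_contract_commute) simp_all

lemma Jc_left_commute: "Jc a b \<odot> (Jc c d \<odot> X) = Jc c d \<odot> (Jc a b \<odot> X)"
  by (metis Jc_commute gmul_assoc)

lemma Vc_commute: "Vc C a b = Vc C b a"
  unfolding Vc_def colour_cross_def[symmetric]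
  by (intro colour_cross_swap generator_anticomm is_generator_psi)

definition psib_det :: "nat \<Rightarrow> nat \<Rightarrow> nat \<Rightarrow> grass" where
  "psib_det a b c = colour_det (\<lambda>l. psib ([a, b, c] ! l))"

definition psi_det :: "nat \<Rightarrow> nat \<Rightarrow> nat \<Rightarrow> grass" where
  "psi_det a b c = colour_det (\<lambda>l. psi ([a, b, c] ! l))"

lemma psib_det_mult_psi_det:
  "psib_det x1 x2 x3 \<odot> psi_det y1 y2 y3 = - (
      Jc x1 y1 \<odot> Jc x2 y2 \<odot> Jc x3 y3 + Jc x1 y2 \<odot> Jc x2 y3 \<odot> Jc x3 y1
    + Jc x1 y3 \<odot> Jc x2 y1 \<odot> Jc x3 y2 + Jc x1 y1 \<odot> Jc x2 y3 \<odot> Jc x3 y2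
    + Jc x1 y3 \<odot> Jc x2 y2 \<odot> Jc x3 y1 + Jc x1 y2 \<odot> Jc x2 y1 \<odot> Jc x3 y3)"
  unfolding psib_det_def psi_det_def Jc_eq_colour_contract
  by (subst colour_det_mult) simp_all

lemma psi_Vc_cyclic_sum:
  assumes "A < 3" "B < 3"
  shows "psi a A \<odot> Vc B b c + psi b A \<odot> Vc B c a + psi c A \<odot> Vc B a b = gcol A B \<cdot>\<^sub>G psi_det a b c"
  using colour_cross_cyclic_sum[of "\<lambda>l. psi ([a, b, c] ! l)", OF _ assms]
  by (simp add: psi_det_def Vc_def colour_cross_def)

lemma X2_eq_sum_psib_det_psi_det:
  "X2 = (\<Sum>g<4. \<Sum>h<4. \<Sum>c<4. (if undotted g \<noteq> undotted h then 4 else 0) \<cdot>\<^sub>G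
     (psib_det h g c \<odot> psi_det (flip_dot g) (flip_dot h) (flip_dot c)))"
proof -
  define Z where "Z a b c d e f = Jc a d \<odot> Jc b e \<odot> Jc c f + 2 \<cdot>\<^sub>G (Jc a e \<odot> Jc b f \<odot> Jc c d)"
    for a b c d e f
  have "X2 = (\<Sum>a<4. \<Sum>b<4. \<Sum>c<4. (if undotted b \<noteq> undotted c then 4 else 0) \<cdot>\<^sub>G
      - (Z a b c (flip_dot a) (flip_dot b) (flip_dot c) + Z a b c (flip_dot a) (flip_dot c) (flip_dot b)))"
  proof -
    have coeff: "(4 * (if P then -1 else 0)) \<cdot>\<^sub>G x = (if P then 4 else 0) \<cdot>\<^sub>G - x" for P and x :: grass
      by (simp add: gscale_minus_left gscale_minus_right)
    show ?thesis
      unfolding X2_def Z_def[symmetric]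
      by (simp add: gscale_sum_right sum_beta4_beta2_gscale gscale_gscale coeff del: minus_add_distrib)
  qed
  also have "\<dots> = (\<Sum>a<4. \<Sum>b<4. \<Sum>c<4. (if undotted b \<noteq> undotted c then 4 else 0) \<cdot>\<^sub>G
      (psib_det c b a \<odot> psi_det (flip_dot b) (flip_dot c) (flip_dot a)))"
  proof (rule sum.cong[OF refl], rule sum_symmetric_pairs_eq)
    have two: "2 \<cdot>\<^sub>G x = x + x" for x :: grass
      by (simp add: gscale_def fun_eq_iff)
    show "- (Z a b c (flip_dot a) (flip_dot b) (flip_dot c) + Z a b c (flip_dot a) (flip_dot c) (flip_dot b))
        + - (Z a c b (flip_dot a) (flip_dot c) (flip_dot b) + Z a c b (flip_dot a) (flip_dot b) (flip_dot c))
      = psib_det c b a \<odot> psi_det (flip_dot b) (flip_dot c) (flip_dot a)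
        + psib_det b c a \<odot> psi_det (flip_dot c) (flip_dot b) (flip_dot a)" for a b c
      by (simp add: Z_def psib_det_mult_psi_det Jc_commute Jc_left_commute gmul_assoc two algebra_simps)
  qed auto
  also have "\<dots> = (\<Sum>g<4. \<Sum>h<4. \<Sum>c<4. (if undotted g \<noteq> undotted h then 4 else 0) \<cdot>\<^sub>G
     (psib_det h g c \<odot> psi_det (flip_dot g) (flip_dot h) (flip_dot c)))"
    by (rule sum_rotate3[symmetric])
  finally show ?thesis .
qed

lemma sum_mu_colour_contract:
  assumes "A < 3"
  shows "(\<Sum>C<3. \<Sum>G<3. \<Sum>H<3. \<Sum>\<mu><4.
       (cnj (gammaLDD \<mu> g h) * cnj (levi C G H)
          * (2 * beta2 c e * gammaDD \<mu> f d + beta2 c d * gammaDD \<mu> f e)) \<cdot>\<^sub>G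
       (psib h H \<odot> psib g G \<odot> psib c C \<odot> psiU A d \<odot> Vc B e f))
    = (4 * beta2 c e * beta4 g h f d + 2 * beta2 c d * beta4 g h f e) \<cdot>\<^sub>G
       (- psib_det h g c \<odot> psi d A \<odot> Vc B e f)"
    (is "_ = ?W \<cdot>\<^sub>G _")
proof -
  have "(\<Sum>\<mu><4. cnj (gammaLDD \<mu> g h) * cnj (levi C G H)
          * (2 * beta2 c e * gammaDD \<mu> f d + beta2 c d * gammaDD \<mu> f e)) = levi C G H * ?W" for C G H
    by (simp add: beta4_def sum_distrib_left sum.distrib algebra_simps)
  then have "(\<Sum>C<3. \<Sum>G<3. \<Sum>H<3. \<Sum>\<mu><4.
       (cnj (gammaLDD \<mu> g h) * cnj (levi C G H)
          * (2 * beta2 c e * gammaDD \<mu> f d + beta2 c d * gammaDD \<mu> f e)) \<cdot>\<^sub>G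
       (psib h H \<odot> psib g G \<odot> psib c C \<odot> psiU A d \<odot> Vc B e f))
    = ?W \<cdot>\<^sub>G ((\<Sum>C<3. \<Sum>G<3. \<Sum>H<3. levi C G H \<cdot>\<^sub>G (psib h H \<odot> psib g G \<odot> psib c C)) \<odot> psi d A \<odot> Vc B e f)"
    by (simp add: gscale_sum_left[symmetric] psiU_eq assms gmul_sum_left gmul_gscale_left
        gscale_sum_right gscale_gscale mult.commute)
  also have "\<dots> = ?W \<cdot>\<^sub>G (- psib_det h g c \<odot> psi d A \<odot> Vc B e f)"
    using colour_det_reversed[of "\<lambda>l. psib ([h, g, c] ! l)"] by (simp add: psib_det_def)
  finally show ?thesis .
qed

lemma sum_spinor_contract:
  assumes "A < 3" "B < 3" "g < 4" "h < 4" "c < 4"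
  shows "(\<Sum>d<4. \<Sum>e<4. \<Sum>f<4. (4 * beta2 c e * beta4 g h f d + 2 * beta2 c d * beta4 g h f e) \<cdot>\<^sub>G
       (- psib_det h g c \<odot> psi d A \<odot> Vc B e f))
    = (if undotted g \<noteq> undotted h then 4 else 0) \<cdot>\<^sub>G
       (gcol A B \<cdot>\<^sub>G (psib_det h g c \<odot> psi_det (flip_dot g) (flip_dot h) (flip_dot c)))"
proof -
  let ?P = "psib_det h g c" and ?g = "flip_dot g" and ?h = "flip_dot h" and ?c = "flip_dot c"
  have cyclic: "psi ?h A \<odot> Vc B ?c ?g + psi ?g A \<odot> Vc B ?c ?h + psi ?c A \<odot> Vc B ?g ?h
      = gcol A B \<cdot>\<^sub>G psi_det ?g ?h ?c"
    using psi_Vc_cyclic_sum[OF assms(1,2), of ?g ?h ?c] Vc_commute[of B ?h ?c] by (simp add: add_ac)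
  have "(\<Sum>d<4. \<Sum>e<4. \<Sum>f<4. (4 * beta2 c e * beta4 g h f d + 2 * beta2 c d * beta4 g h f e) \<cdot>\<^sub>G
       (- ?P \<odot> psi d A \<odot> Vc B e f))
    = (if undotted g \<noteq> undotted h then 4 else 0) \<cdot>\<^sub>G
       (?P \<odot> (psi ?h A \<odot> Vc B ?c ?g + psi ?g A \<odot> Vc B ?c ?h + psi ?c A \<odot> Vc B ?g ?h))"
    unfolding sum_beta2_beta4_gscale[OF assms(3-5)] Vc_commute[of B ?h ?g]
    by (simp add: gmul_assoc gmul_minus_left gmul_add_right gscale_def fun_eq_iff algebra_simps)
  then show ?thesis
    by (simp add: cyclic gmul_gscale_right)
qed

theorem lemma2:
  fixes A B :: nat
  assumes "A < 3" and "B < 3"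
  shows "gcol A B \<cdot>\<^sub>G X2 =
    (\<Sum>\<mu><4. \<Sum>g<4. \<Sum>h<4. \<Sum>C<3. \<Sum>G<3. \<Sum>H<3. \<Sum>c<4. \<Sum>d<4. \<Sum>e<4. \<Sum>f<4.
       (cnj (gammaLDD \<mu> g h) * cnj (levi C G H)
          * (2 * beta2 c e * gammaDD \<mu> f d + beta2 c d * gammaDD \<mu> f e)) \<cdot>\<^sub>G
       (psib h H \<odot> psib g G \<odot> psib c C \<odot> psiU A d \<odot> Vc B e f))"
proof -
  have "gcol A B \<cdot>\<^sub>G X2 = (\<Sum>g<4. \<Sum>h<4. \<Sum>c<4. (if undotted g \<noteq> undotted h then 4 else 0) \<cdot>\<^sub>G
       (gcol A B \<cdot>\<^sub>G (psib_det h g c \<odot> psi_det (flip_dot g) (flip_dot h) (flip_dot c))))"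
    by (simp add: X2_eq_sum_psib_det_psi_det gscale_sum_right gscale_gscale mult.commute)
  also have "\<dots> = (\<Sum>g<4. \<Sum>h<4. \<Sum>c<4. \<Sum>d<4. \<Sum>e<4. \<Sum>f<4.
       (4 * beta2 c e * beta4 g h f d + 2 * beta2 c d * beta4 g h f e) \<cdot>\<^sub>G
       (- psib_det h g c \<odot> psi d A \<odot> Vc B e f))"
    by (intro sum.cong refl sum_spinor_contract[symmetric] assms) simp_all
  finally show ?thesis
    by (simp only: sum_nested_reorder sum_mu_colour_contract assms)
qed

end
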